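(* Let $X=\ell^p(\mathbb{N})$ with $1\leq p<\infty$, or $X=c_0(\mathbb{N})$, and let $w=\{w_j\}_{j\in\mathbb{N}}$ be a bounded sequence of non-zero scalars. Let $B_w\colon X\to X$ be the unilateral backward weighted shift $(x_1,x_2,\dots)\mapsto(w_2x_2,w_3x_3,\dots)$. Then the following are equivalent: (1) $\sup_{k,n\in\mathbb{N}}\prod_{j=k+1}^{n+k+1}|w_j|=\infty$; (2) there exists a Li-Yorke scrambled pair for $B_w$; (3) $B_w$ is Li-Yorke chaotic; (4) $B_w$ admits a dense irregular manifold; (5) $B_w$ is densely uniformly Li-Yorke chaotic.
   Context: A pair $(x,y)\in X\times X$ is Li-Yorke scrambled for $T$ if $\liminf_n\|T^nx-T^ny\|=0$ and $\limsup_n\|T^nx-T^ny\|>0$; $T$ is Li-Yorke chaotic if there is an uncountable set $S\subset X$ every pair of distinct points of which is Li-Yorke scrambled. A vector $x$ is irregular if $\liminf_n\|T^nx\|=0$ and $\limsup_n\|T^nx\|=\infty$; an irregular manifold is a vector subspace all of whose non-zero vectors are irregular. A subset $S\subset X$ with at least two points is uniformly Li-Yorke scrambled for $T$ if there exist sequences $\{p_n\}$, $\{q_n\}$ in $\mathbb{N}$ such that for all distinct $x,y\in S$: $\lim_n\|T^{p_n}x-T^{p_n}y\|=0$ and $\lim_n\|T^{q_n}x-T^{q_n}y\|=\infty$; $T$ is densely uniformly Li-Yorke chaotic if there is a dense, uncountable such set. *)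

theory Defs
  imports "HOL-Analysis.Analysis"
begin

text \<open>Sequence spaces over a scalar field 'a (real or complex). Sequences are indexed
  from 0: the coordinate x n corresponds to the paper's x_(n+1).\<close>

definition lp_seq :: "real \<Rightarrow> (nat \<Rightarrow> 'a::real_normed_field) set" where
  "lp_seq p = {x. summable (\<lambda>n. norm (x n) powr p)}"

definition lp_norm :: "real \<Rightarrow> (nat \<Rightarrow> 'a::real_normed_field) \<Rightarrow> real" where
  "lp_norm p x = (\<Sum>n. norm (x n) powr p) powr (1 / p)"

definition c0_seq :: "(nat \<Rightarrow> 'a::real_normed_field) set" where
  "c0_seq = {x. x \<longlonglongrightarrow> 0}"

definition c0_norm :: "(nat \<Rightarrow> 'a::real_normed_field) \<Rightarrow> real" where
  "c0_norm x = (SUP n. norm (x n))"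

text \<open>Unilateral backward weighted shift, with weights w indexed as in the paper
  (w j = w_j for j \<ge> 1; w 0 is unused). In paper indexing
  (B_w x)_i = w_(i+1) x_(i+1); in 0-based coordinates (B_w x) m = w (m+2) * x (m+1).\<close>

definition bw_shift :: "(nat \<Rightarrow> 'a::real_normed_field) \<Rightarrow> (nat \<Rightarrow> 'a) \<Rightarrow> (nat \<Rightarrow> 'a)" where
  "bw_shift w x = (\<lambda>m. w (m + 2) * x (m + 1))"

definition seq_diff :: "(nat \<Rightarrow> 'a::real_normed_field) \<Rightarrow> (nat \<Rightarrow> 'a) \<Rightarrow> (nat \<Rightarrow> 'a)" where
  "seq_diff x y = (\<lambda>n. x n - y n)"

definition li_yorke_pair ::
  "((nat \<Rightarrow> 'a::real_normed_field) \<Rightarrow> real) \<Rightarrow> ((nat \<Rightarrow> 'a) \<Rightarrow> (nat \<Rightarrow> 'a)) \<Rightarrow> (nat \<Rightarrow> 'a) \<Rightarrow> (nat \<Rightarrow> 'a) \<Rightarrow> bool" where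
  "li_yorke_pair N T x y \<longleftrightarrow>
     liminf (\<lambda>n. ereal (N (seq_diff ((T ^^ n) x) ((T ^^ n) y)))) = 0 \<and>
     limsup (\<lambda>n. ereal (N (seq_diff ((T ^^ n) x) ((T ^^ n) y)))) > 0"

definition li_yorke_chaotic ::
  "(nat \<Rightarrow> 'a::real_normed_field) set \<Rightarrow> ((nat \<Rightarrow> 'a) \<Rightarrow> real) \<Rightarrow> ((nat \<Rightarrow> 'a) \<Rightarrow> (nat \<Rightarrow> 'a)) \<Rightarrow> bool" where
  "li_yorke_chaotic X N T \<longleftrightarrow>
     (\<exists>S. S \<subseteq> X \<and> uncountable S \<and>
          (\<forall>x\<in>S. \<forall>y\<in>S. x \<noteq> y \<longrightarrow> li_yorke_pair N T x y))"

definition irregular_vec ::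
  "((nat \<Rightarrow> 'a::real_normed_field) \<Rightarrow> real) \<Rightarrow> ((nat \<Rightarrow> 'a) \<Rightarrow> (nat \<Rightarrow> 'a)) \<Rightarrow> (nat \<Rightarrow> 'a) \<Rightarrow> bool" where
  "irregular_vec N T x \<longleftrightarrow>
     liminf (\<lambda>n. ereal (N ((T ^^ n) x))) = 0 \<and>
     limsup (\<lambda>n. ereal (N ((T ^^ n) x))) = \<infinity>"

definition seq_subspace :: "(nat \<Rightarrow> 'a::real_normed_field) set \<Rightarrow> bool" where
  "seq_subspace M \<longleftrightarrow> (\<lambda>n. 0) \<in> M \<and>
     (\<forall>x\<in>M. \<forall>y\<in>M. (\<lambda>n. x n + y n) \<in> M) \<and>
     (\<forall>c::'a. \<forall>x\<in>M. (\<lambda>n. c * x n) \<in> M)"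

definition dense_in_space ::
  "(nat \<Rightarrow> 'a::real_normed_field) set \<Rightarrow> ((nat \<Rightarrow> 'a) \<Rightarrow> real) \<Rightarrow> (nat \<Rightarrow> 'a) set \<Rightarrow> bool" where
  "dense_in_space X N D \<longleftrightarrow> D \<subseteq> X \<and>
     (\<forall>x\<in>X. \<forall>e>0. \<exists>d\<in>D. N (seq_diff x d) < e)"

definition dense_irregular_manifold ::
  "(nat \<Rightarrow> 'a::real_normed_field) set \<Rightarrow> ((nat \<Rightarrow> 'a) \<Rightarrow> real) \<Rightarrow> ((nat \<Rightarrow> 'a) \<Rightarrow> (nat \<Rightarrow> 'a)) \<Rightarrow> bool" where
  "dense_irregular_manifold X N T \<longleftrightarrow>
     (\<exists>M. seq_subspace M \<and> dense_in_space X N M \<and>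
          (\<forall>x\<in>M. x \<noteq> (\<lambda>n. 0) \<longrightarrow> irregular_vec N T x))"

definition uniformly_li_yorke_scrambled ::
  "(nat \<Rightarrow> 'a::real_normed_field) set \<Rightarrow> ((nat \<Rightarrow> 'a) \<Rightarrow> real) \<Rightarrow> ((nat \<Rightarrow> 'a) \<Rightarrow> (nat \<Rightarrow> 'a)) \<Rightarrow> (nat \<Rightarrow> 'a) set \<Rightarrow> bool" where
  "uniformly_li_yorke_scrambled X N T S \<longleftrightarrow> S \<subseteq> X \<and> (\<exists>x\<in>S. \<exists>y\<in>S. x \<noteq> y) \<and>
     (\<exists>p q :: nat \<Rightarrow> nat. \<forall>x\<in>S. \<forall>y\<in>S. x \<noteq> y \<longrightarrow>
        (\<lambda>n. N (seq_diff ((T ^^ p n) x) ((T ^^ p n) y))) \<longlonglongrightarrow> 0 \<and>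
        filterlim (\<lambda>n. N (seq_diff ((T ^^ q n) x) ((T ^^ q n) y))) at_top sequentially)"

definition densely_uniformly_li_yorke_chaotic ::
  "(nat \<Rightarrow> 'a::real_normed_field) set \<Rightarrow> ((nat \<Rightarrow> 'a) \<Rightarrow> real) \<Rightarrow> ((nat \<Rightarrow> 'a) \<Rightarrow> (nat \<Rightarrow> 'a)) \<Rightarrow> bool" where
  "densely_uniformly_li_yorke_chaotic X N T \<longleftrightarrow>
     (\<exists>S. dense_in_space X N S \<and> uncountable S \<and> uniformly_li_yorke_scrambled X N T S)"

end

theory Submission
  imports Defs
begin

text \<open>Write T for B_w. In 0-based coordinates (T^n x)_m = w_(m+2) ... w_(m+n+1) x_(m+n), and
  condition (1) says exactly that these weight products are unbounded.

  If they are bounded by C, then ||T^m x|| <= C ||T^n x|| for n <= m, so an orbit that comes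
  close to 0 tends to 0 and no orbit is unbounded; this rules out (2)-(5).

  If they are unbounded, choose spike positions j_0 < j_1 < ... with coefficients c_l and times
  q_l such that c_l times the product of the q_l weights ending at j_l is at least (l+1)^(l+1),
  while the c_l decrease so fast that T^(j_k + 1) maps sum_l c_l e_(j_l) to a vector of norm at
  most 2^-k. The span of the vectors e_k + 2^-s sum_l c_l (l+1)^-r e_(j_l) is dense and
  uncountable. Each of its elements is shrunk to 0 along the times j_k + 1, and each nonzero
  element blows up along the times q_l, because at j_l its lowest power of 1/(l+1) dominates.
  Differences of elements stay in the span, so the span witnesses (2)-(5).\<close>

section \<open>Sequence spaces\<close>

definition spread :: "(nat \<Rightarrow> nat) \<Rightarrow> (nat \<Rightarrow> 'a::zero) \<Rightarrow> nat \<Rightarrow> 'a" where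
  "spread j v i = (if i \<in> range j then v (inv j i) else 0)"

lemma spread_at: "strict_mono j \<Longrightarrow> spread j v (j l) = v l"
  unfolding spread_def by (simp add: strict_mono_imp_inj_on)

lemma spread_outside: "i \<notin> range j \<Longrightarrow> spread j v i = 0"
  unfolding spread_def by simp

lemma spread_id [simp]: "spread id v = v"
  by (simp add: spread_def fun_eq_iff)

lemma seq_diff_eq_0_iff: "seq_diff x y = (\<lambda>i. 0) \<longleftrightarrow> x = y"
  by (simp add: seq_diff_def fun_eq_iff)

definition unit_seq :: "nat \<Rightarrow> nat \<Rightarrow> 'a::{zero, one}" where
  "unit_seq k i = (if i = k then 1 else 0)"

lemma summable_norm_unit_seq: "summable (\<lambda>i. norm (unit_seq k i :: 'a::real_normed_algebra_1))"
proof -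
  have "(\<lambda>i. norm (unit_seq k i :: 'a)) = (\<lambda>i. if i = k then 1 else 0)"
    by (simp add: unit_seq_def fun_eq_iff)
  then show ?thesis
    using sums_summable[OF sums_single[of k "\<lambda>_. 1::real"]] by simp
qed

lemma term_le_suminf:
  fixes f :: "nat \<Rightarrow> real"
  assumes "summable f" "\<And>n. 0 \<le> f n"
  shows "f i \<le> suminf f"
  using sum_le_suminf[OF assms(1), of "{i}"] assms(2) by simp

lemma powr_add_le:
  fixes a b r :: real
  assumes "0 \<le> a" "0 \<le> b" "0 < r"
  shows "(a + b) powr r \<le> 2 powr r * (a powr r + b powr r)"
proof -
  have "(a + b) powr r \<le> (2 * max a b) powr r"
    using assms by (intro powr_mono2) auto
  also have "\<dots> = 2 powr r * max a b powr r"
    using assms by (simp add: powr_mult)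
  also have "\<dots> \<le> 2 powr r * (a powr r + b powr r)"
    using assms by (intro mult_left_mono) (auto simp: max_def)
  finally show ?thesis .
qed

text \<open>A quasi-triangle inequality suffices for the argument, which spares us Minkowski's
  inequality for \<open>\<ell>\<^sup>p\<close>.\<close>

locale seq_space =
  fixes X :: "(nat \<Rightarrow> 'a::real_normed_field) set" and N :: "(nat \<Rightarrow> 'a) \<Rightarrow> real"
  assumes norm_coord_le: "x \<in> X \<Longrightarrow> norm (x i) \<le> N x"
    and dominated_mem:
      "y \<in> X \<Longrightarrow> 0 \<le> C \<Longrightarrow> (\<And>i. norm (x i) \<le> C * norm (y (i + n))) \<Longrightarrow> x \<in> X"
    and dominated_le:
      "y \<in> X \<Longrightarrow> 0 \<le> C \<Longrightarrow> (\<And>i. norm (x i) \<le> C * norm (y (i + n))) \<Longrightarrow> N x \<le> C * N y"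
    and add_mem: "x \<in> X \<Longrightarrow> y \<in> X \<Longrightarrow> (\<lambda>i. x i + y i) \<in> X"
    and quasi_triangle: "x \<in> X \<Longrightarrow> y \<in> X \<Longrightarrow> N (\<lambda>i. x i + y i) \<le> 4 * (N x + N y)"
    and spread_mem: "strict_mono j \<Longrightarrow> summable (\<lambda>l. norm (v l)) \<Longrightarrow> spread j v \<in> X"
    and norm_spread_le:
      "strict_mono j \<Longrightarrow> summable (\<lambda>l. norm (v l)) \<Longrightarrow> N (spread j v) \<le> (\<Sum>l. norm (v l))"
    and tail_small: "x \<in> X \<Longrightarrow> 0 < e \<Longrightarrow> \<exists>L. N (\<lambda>i. if i < L then 0 else x i) < e"

lemma lp_seqD: "x \<in> lp_seq p \<Longrightarrow> summable (\<lambda>n. norm (x n) powr p)"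
  by (simp add: lp_seq_def)

lemma lp_norm_coord_le:
  assumes "0 < p" "x \<in> lp_seq p"
  shows "norm (x i) \<le> lp_norm p x"
proof -
  have "norm (x i) powr p \<le> (\<Sum>n. norm (x n) powr p)"
    by (rule term_le_suminf[OF lp_seqD[OF assms(2)]]) simp
  then have "(norm (x i) powr p) powr (1/p) \<le> (\<Sum>n. norm (x n) powr p) powr (1/p)"
    using assms by (intro powr_mono2) auto
  then show ?thesis
    using assms by (simp add: lp_norm_def powr_powr)
qed

lemma lp_dominated:
  assumes p: "0 < p" and y: "y \<in> lp_seq p" and C: "0 \<le> C"
    and le: "\<And>i. norm (x i) \<le> C * norm (y (i + n))"
  shows "x \<in> lp_seq p \<and> lp_norm p x \<le> C * lp_norm p y"
proof -
  have sy: "summable (\<lambda>n. norm (y n) powr p)"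
    using y by (rule lp_seqD)
  have sy_shift: "summable (\<lambda>i. norm (y (i + n)) powr p)"
    using summable_ignore_initial_segment[OF sy] .
  have le_powr: "norm (x i) powr p \<le> C powr p * norm (y (i + n)) powr p" for i
  proof -
    have "norm (x i) powr p \<le> (C * norm (y (i + n))) powr p"
      using le[of i] p by (intro powr_mono2) auto
    also have "\<dots> = C powr p * norm (y (i + n)) powr p"
      using C by (simp add: powr_mult)
    finally show ?thesis .
  qed
  have sx: "summable (\<lambda>i. norm (x i) powr p)"
    by (rule summable_comparison_test'[OF summable_mult[OF sy_shift]]) (use le_powr in auto)
  have "(\<Sum>i. norm (x i) powr p) \<le> (\<Sum>i. C powr p * norm (y (i + n)) powr p)"
    by (rule suminf_le[OF le_powr sx summable_mult[OF sy_shift]])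
  also have "\<dots> = C powr p * (\<Sum>i. norm (y (i + n)) powr p)"
    using sy_shift by (rule suminf_mult)
  also have "\<dots> \<le> C powr p * (\<Sum>i. norm (y i) powr p)"
    using suminf_split_initial_segment[OF sy, of n] by (intro mult_left_mono) (simp_all add: sum_nonneg)
  finally have "(\<Sum>i. norm (x i) powr p) \<le> C powr p * (\<Sum>i. norm (y i) powr p)" .
  then have "lp_norm p x \<le> (C powr p * (\<Sum>i. norm (y i) powr p)) powr (1/p)"
    unfolding lp_norm_def using p by (intro powr_mono2) (auto intro!: suminf_nonneg sx)
  also have "\<dots> = C * lp_norm p y"
    unfolding lp_norm_def using C p
    by (subst powr_mult) (auto simp: powr_powr intro!: suminf_nonneg sy)
  finally show ?thesis
    using sx by (simp add: lp_seq_def)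
qed

lemma lp_add:
  assumes p: "1 \<le> p" and x: "x \<in> lp_seq p" and y: "y \<in> lp_seq p"
  shows "(\<lambda>i. x i + y i) \<in> lp_seq p \<and> lp_norm p (\<lambda>i. x i + y i) \<le> 4 * (lp_norm p x + lp_norm p y)"
proof -
  have sx: "summable (\<lambda>n. norm (x n) powr p)" and sy: "summable (\<lambda>n. norm (y n) powr p)"
    using x y by (simp_all add: lp_seqD)
  define A where "A = (\<Sum>n. norm (x n) powr p)"
  define B where "B = (\<Sum>n. norm (y n) powr p)"
  have A0: "0 \<le> A" and B0: "0 \<le> B"
    unfolding A_def B_def by (auto intro!: suminf_nonneg sx sy)
  have le: "norm (x i + y i) powr p \<le> 2 powr p * (norm (x i) powr p + norm (y i) powr p)" for i
  proof -
    have "norm (x i + y i) powr p \<le> (norm (x i) + norm (y i)) powr p"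
      using p by (intro powr_mono2) (auto intro: norm_triangle_ineq)
    also have "\<dots> \<le> 2 powr p * (norm (x i) powr p + norm (y i) powr p)"
      using p by (intro powr_add_le) auto
    finally show ?thesis .
  qed
  have s2: "summable (\<lambda>i. 2 powr p * (norm (x i) powr p + norm (y i) powr p))"
    by (intro summable_mult summable_add sx sy)
  have sxy: "summable (\<lambda>i. norm (x i + y i) powr p)"
    by (rule summable_comparison_test'[OF s2]) (use le in auto)
  have "(\<Sum>i. norm (x i + y i) powr p) \<le> 2 powr p * (A + B)"
    using suminf_le[OF le sxy s2] sx sy unfolding A_def B_def
    by (simp add: suminf_mult suminf_add[OF sx sy, symmetric] summable_add)
  then have "lp_norm p (\<lambda>i. x i + y i) \<le> (2 powr p * (A + B)) powr (1/p)"
    unfolding lp_norm_def using p by (intro powr_mono2) (auto intro!: suminf_nonneg sxy)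
  also have "\<dots> = 2 * (A + B) powr (1/p)"
    using A0 B0 p by (simp add: powr_mult powr_powr)
  also have "\<dots> \<le> 2 * (2 powr (1/p) * (A powr (1/p) + B powr (1/p)))"
    using A0 B0 p by (intro mult_left_mono powr_add_le) auto
  also have "\<dots> \<le> 2 * (2 * (A powr (1/p) + B powr (1/p)))"
  proof -
    have "2 powr (1/p) \<le> 2 powr 1"
      using p by (intro powr_mono) auto
    then show ?thesis
      by (intro mult_left_mono mult_right_mono) auto
  qed
  also have "\<dots> = 4 * (lp_norm p x + lp_norm p y)"
    unfolding lp_norm_def A_def B_def by simp
  finally show ?thesis
    using sxy by (simp add: lp_seq_def)
qed

lemma lp_spread:
  assumes p: "1 \<le> p" and j: "strict_mono j" and sv: "summable (\<lambda>l. norm (v l))"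
  shows "spread j v \<in> lp_seq p \<and> lp_norm p (spread j v) \<le> (\<Sum>l. norm (v l))"
proof -
  define S where "S = (\<Sum>l. norm (v l))"
  have vS: "norm (v l) \<le> S" for l
    unfolding S_def by (rule term_le_suminf[OF sv]) simp
  have S0: "0 \<le> S"
    using vS[of 0] norm_ge_zero order_trans by blast
  have le: "norm (v l) powr p \<le> S powr (p - 1) * norm (v l)" for l
  proof (cases "v l = 0")
    case False
    then have "norm (v l) powr p = norm (v l) powr (p - 1) * norm (v l)"
      by (simp add: powr_diff)
    also have "\<dots> \<le> S powr (p - 1) * norm (v l)"
      using vS[of l] p by (intro mult_right_mono powr_mono2) auto
    finally show ?thesis .
  qed simp
  have s1: "summable (\<lambda>l. S powr (p - 1) * norm (v l))"
    by (intro summable_mult sv)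
  have s2: "summable (\<lambda>l. norm (v l) powr p)"
    by (rule summable_comparison_test'[OF s1]) (use le in auto)
  have zero: "\<And>n. n \<notin> range j \<Longrightarrow> norm (spread j v n) powr p = 0"
    by (simp add: spread_outside)
  have reindex: "(\<lambda>l. norm (spread j v (j l)) powr p) = (\<lambda>l. norm (v l) powr p)"
    by (simp add: spread_at[OF j])
  have ssp: "summable (\<lambda>n. norm (spread j v n) powr p)"
    using summable_mono_reindex[of j "\<lambda>n. norm (spread j v n) powr p", OF j zero] s2 reindex
    by simp
  have "(\<Sum>n. norm (spread j v n) powr p) = (\<Sum>l. norm (v l) powr p)"
    using suminf_mono_reindex[of j "\<lambda>n. norm (spread j v n) powr p", OF j zero] reindex by simp
  also have "\<dots> \<le> (\<Sum>l. S powr (p - 1) * norm (v l))"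
    by (rule suminf_le[OF le s2 s1])
  also have "\<dots> = S powr (p - 1) * S"
    unfolding S_def using sv by (simp add: suminf_mult)
  also have "\<dots> = S powr p"
    using S0 p by (cases "S = 0") (simp_all add: powr_diff)
  finally have "lp_norm p (spread j v) \<le> (S powr p) powr (1/p)"
    unfolding lp_norm_def using p by (intro powr_mono2) (auto intro!: suminf_nonneg ssp)
  also have "\<dots> = S"
    using S0 p by (simp add: powr_powr)
  finally show ?thesis
    using ssp by (simp add: lp_seq_def S_def)
qed

lemma lp_tail_small:
  assumes p: "0 < p" and x: "x \<in> lp_seq p" and e: "0 < e"
  shows "\<exists>L. lp_norm p (\<lambda>i. if i < L then 0 else x i) < e"
proof -
  define f where "f n = norm (x n) powr p" for n
  have s: "summable f"
    unfolding f_def using x by (rule lp_seqD)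
  obtain L where L: "(\<Sum>n. f (n + L)) < e powr p"
    using order_tendstoD(2)[OF suminf_exist_split2[OF s], of "e powr p"] e
    by (auto simp: eventually_sequentially)
  define g where "g = (\<lambda>i. norm (if i < L then 0 else x i) powr p)"
  have gs: "summable g"
    by (rule summable_comparison_test'[OF s]) (auto simp: g_def f_def)
  have "suminf g = (\<Sum>n. g (n + L)) + (\<Sum>i<L. g i)"
    by (rule suminf_split_initial_segment[OF gs])
  also have "\<dots> = (\<Sum>n. f (n + L))"
    by (simp add: g_def f_def)
  finally have "suminf g < e powr p"
    using L by simp
  moreover have "0 \<le> suminf g"
    by (intro suminf_nonneg gs) (simp add: g_def)
  ultimately have "suminf g powr (1/p) < (e powr p) powr (1/p)"
    using p by (intro powr_less_mono2) auto
  then show ?thesis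
    using e p by (intro exI[of _ L]) (simp add: lp_norm_def g_def powr_powr)
qed

lemma lp_seq_space:
  assumes "1 \<le> p"
  shows "seq_space (lp_seq p) (lp_norm p)"
proof -
  have p0: "0 < p"
    using assms by simp
  show ?thesis
  proof (unfold_locales, goal_cases)
    case 1 then show ?case by (rule lp_norm_coord_le[OF p0])
  next
    case 2 show ?case by (rule conjunct1[OF lp_dominated[OF p0 2]])
  next
    case 3 show ?case by (rule conjunct2[OF lp_dominated[OF p0 3]])
  next
    case 4 show ?case by (rule conjunct1[OF lp_add[OF assms 4]])
  next
    case 5 show ?case by (rule conjunct2[OF lp_add[OF assms 5]])
  next
    case 6 show ?case by (rule conjunct1[OF lp_spread[OF assms 6]])
  next
    case 7 show ?case by (rule conjunct2[OF lp_spread[OF assms 7]])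
  next
    case 8 then show ?case by (rule lp_tail_small[OF p0])
  qed
qed

lemma c0_norm_coord_le:
  assumes "x \<in> c0_seq"
  shows "norm (x i) \<le> c0_norm x"
proof -
  have "Bseq x"
    using assms unfolding c0_seq_def by (auto intro!: convergent_imp_Bseq convergentI)
  then obtain K where "\<And>n. norm (x n) \<le> K"
    unfolding Bseq_def by auto
  then have "bdd_above (range (\<lambda>n. norm (x n)))"
    by (intro bdd_aboveI2)
  then show ?thesis
    unfolding c0_norm_def by (rule cSUP_upper[rotated]) simp
qed

lemma c0_norm_le: "(\<And>i. norm (x i) \<le> B) \<Longrightarrow> c0_norm x \<le> B"
  unfolding c0_norm_def by (rule cSUP_least) auto

lemma c0_dominated:
  assumes y: "y \<in> c0_seq" and C: "0 \<le> C" and le: "\<And>i. norm (x i) \<le> C * norm (y (i + n))"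
  shows "x \<in> c0_seq \<and> c0_norm x \<le> C * c0_norm y"
proof
  have "(\<lambda>i. y (i + n)) \<longlonglongrightarrow> 0"
    using y unfolding c0_seq_def by (simp add: LIMSEQ_ignore_initial_segment)
  then have "(\<lambda>i. C * norm (y (i + n))) \<longlonglongrightarrow> 0"
    using tendsto_mult_right_zero tendsto_norm_zero by blast
  then show "x \<in> c0_seq"
    unfolding c0_seq_def mem_Collect_eq by (rule Lim_null_comparison[rotated]) (use le in auto)
  show "c0_norm x \<le> C * c0_norm y"
  proof (rule c0_norm_le)
    fix i
    have "norm (x i) \<le> C * norm (y (i + n))"
      by (rule le)
    also have "\<dots> \<le> C * c0_norm y"
      by (intro mult_left_mono c0_norm_coord_le[OF y] C)
    finally show "norm (x i) \<le> C * c0_norm y" .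
  qed
qed

lemma c0_add:
  assumes x: "x \<in> c0_seq" and y: "y \<in> c0_seq"
  shows "(\<lambda>i. x i + y i) \<in> c0_seq \<and> c0_norm (\<lambda>i. x i + y i) \<le> 4 * (c0_norm x + c0_norm y)"
proof
  show "(\<lambda>i. x i + y i) \<in> c0_seq"
    using x y tendsto_add unfolding c0_seq_def by fastforce
  have "0 \<le> c0_norm x" "0 \<le> c0_norm y"
    using c0_norm_coord_le[OF x, of 0] c0_norm_coord_le[OF y, of 0] norm_ge_zero order_trans
    by blast+
  moreover have "c0_norm (\<lambda>i. x i + y i) \<le> c0_norm x + c0_norm y"
    by (rule c0_norm_le) (meson add_mono c0_norm_coord_le norm_triangle_ineq order_trans x y)
  ultimately show "c0_norm (\<lambda>i. x i + y i) \<le> 4 * (c0_norm x + c0_norm y)"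
    by simp
qed

lemma c0_spread:
  assumes j: "strict_mono j" and sv: "summable (\<lambda>l. norm (v l))"
  shows "spread j v \<in> c0_seq \<and> c0_norm (spread j v) \<le> (\<Sum>l. norm (v l))"
proof
  have v0: "v \<longlonglongrightarrow> 0"
    using summable_LIMSEQ_zero[OF sv] tendsto_norm_zero_iff by blast
  show "spread j v \<in> c0_seq"
    unfolding c0_seq_def mem_Collect_eq
  proof (rule LIMSEQ_I)
    fix r :: real
    assume "0 < r"
    then obtain L where L: "\<And>l. L \<le> l \<Longrightarrow> norm (v l) < r"
      using LIMSEQ_D[OF v0] by fastforce
    have "norm (spread j v n) < r" if "j L \<le> n" for n
    proof (cases "n \<in> range j")
      case True
      then obtain l where "n = j l"
        by auto
      with that j L[of l] show ?thesis
        by (simp add: spread_at strict_mono_less_eq)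
    qed (use \<open>0 < r\<close> in \<open>simp add: spread_outside\<close>)
    then show "\<exists>n0. \<forall>n\<ge>n0. norm (spread j v n - 0) < r"
      by auto
  qed
  show "c0_norm (spread j v) \<le> (\<Sum>l. norm (v l))"
    by (rule c0_norm_le)
       (auto simp: spread_def intro: term_le_suminf[OF sv] suminf_nonneg[OF sv])
qed

lemma c0_tail_small:
  assumes x: "x \<in> c0_seq" and e: "0 < e"
  shows "\<exists>L. c0_norm (\<lambda>i. if i < L then 0 else x i) < e"
proof -
  obtain L where L: "\<And>n. L \<le> n \<Longrightarrow> norm (x n) < e / 2"
    using LIMSEQ_D[of x 0 "e / 2"] x e unfolding c0_seq_def by fastforce
  have "c0_norm (\<lambda>i. if i < L then 0 else x i) \<le> e / 2"
    by (rule c0_norm_le) (use L e in \<open>auto simp: less_imp_le\<close>)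
  then show ?thesis
    using e by (intro exI[of _ L]) simp
qed

lemma c0_seq_space: "seq_space c0_seq c0_norm"
proof (unfold_locales, goal_cases)
  case 1 then show ?case by (rule c0_norm_coord_le)
next
  case 2 show ?case by (rule conjunct1[OF c0_dominated[OF 2]])
next
  case 3 show ?case by (rule conjunct2[OF c0_dominated[OF 3]])
next
  case 4 show ?case by (rule conjunct1[OF c0_add[OF 4]])
next
  case 5 show ?case by (rule conjunct2[OF c0_add[OF 5]])
next
  case 6 show ?case by (rule conjunct1[OF c0_spread[OF 6]])
next
  case 7 show ?case by (rule conjunct2[OF c0_spread[OF 7]])
next
  case 8 then show ?case by (rule c0_tail_small)
qed

context seq_space
begin

lemma N_nonneg: "x \<in> X \<Longrightarrow> 0 \<le> N x"
  using norm_coord_le[of x 0] norm_ge_zero order_trans by blast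

lemma zero_mem: "(\<lambda>i. 0) \<in> X"
  using spread_mem[of id "\<lambda>l. 0"] by (simp add: strict_mono_def)

lemma N_zero: "N (\<lambda>i. 0) = 0"
proof -
  have "N (\<lambda>i. 0) \<le> 0 * N (\<lambda>i. 0)"
    by (rule dominated_le[OF zero_mem]) simp_all
  then show ?thesis
    using N_nonneg[OF zero_mem] by simp
qed

lemma unit_seq_mem: "unit_seq k \<in> X"
proof -
  have "spread id (unit_seq k) \<in> X"
    by (rule spread_mem) (simp_all add: strict_mono_def summable_norm_unit_seq)
  then show ?thesis
    by simp
qed

lemma scale_mem: "x \<in> X \<Longrightarrow> (\<lambda>i. c * x i) \<in> X"
  using dominated_mem[of x "norm c" "\<lambda>i. c * x i" 0] by (simp add: norm_mult)

lemma N_scale_le: "x \<in> X \<Longrightarrow> N (\<lambda>i. c * x i) \<le> norm c * N x"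
  using dominated_le[of x "norm c" "\<lambda>i. c * x i" 0] by (simp add: norm_mult)

lemma diff_mem:
  assumes "x \<in> X" "y \<in> X"
  shows "seq_diff x y \<in> X"
proof -
  have "(\<lambda>i. x i + (-1) * y i) \<in> X"
    using add_mem[OF assms(1) scale_mem[OF assms(2)]] .
  then show ?thesis
    by (simp add: seq_diff_def)
qed

lemma sum_mem: "finite F \<Longrightarrow> (\<And>r. r \<in> F \<Longrightarrow> f r \<in> X) \<Longrightarrow> (\<lambda>i. \<Sum>r\<in>F. f r i) \<in> X"
  by (induction F rule: finite_induct) (simp_all add: zero_mem add_mem)

lemma N_sum_le:
  assumes "finite F" "\<And>r. r \<in> F \<Longrightarrow> f r \<in> X"
  shows "N (\<lambda>i. \<Sum>r\<in>F. f r i) \<le> 4 ^ card F * (\<Sum>r\<in>F. N (f r))"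
  using assms
proof (induction F rule: finite_induct)
  case empty
  then show ?case
    by (simp add: N_zero)
next
  case (insert a F)
  have "N (\<lambda>i. \<Sum>r\<in>insert a F. f r i) = N (\<lambda>i. f a i + (\<Sum>r\<in>F. f r i))"
    using insert by simp
  also have "\<dots> \<le> 4 * (N (f a) + N (\<lambda>i. \<Sum>r\<in>F. f r i))"
    using insert by (intro quasi_triangle sum_mem) auto
  also have "\<dots> \<le> 4 * (4 ^ card F * N (f a) + 4 ^ card F * (\<Sum>r\<in>F. N (f r)))"
  proof -
    have "N (f a) \<le> 4 ^ card F * N (f a)"
      using insert N_nonneg[of "f a"] by (simp add: mult_le_cancel_right1)
    then show ?thesis
      using insert by (intro mult_left_mono add_mono) auto
  qed
  also have "\<dots> = 4 ^ card (insert a F) * (\<Sum>r\<in>insert a F. N (f r))"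
    using insert by (simp add: algebra_simps)
  finally show ?case .
qed

end

section \<open>Iterates of the weighted backward shift\<close>

definition wprod :: "(nat \<Rightarrow> 'a::real_normed_field) \<Rightarrow> nat \<Rightarrow> nat \<Rightarrow> 'a" where
  "wprod w m n = (\<Prod>j\<in>{m+2..m+n+1}. w j)"

lemma wprod_0 [simp]: "wprod w m 0 = 1"
  by (simp add: wprod_def)

lemma wprod_Suc: "wprod w m (Suc n) = w (m + 2) * wprod w (Suc m) n"
proof -
  have "{m+2..m + Suc n + 1} = insert (m+2) {Suc m + 2..Suc m + n + 1}"
    by auto
  then show ?thesis
    unfolding wprod_def by simp
qed

lemma bw_shift_power_apply: "(bw_shift w ^^ n) x m = wprod w m n * x (m + n)"
proof (induction n arbitrary: m)
  case (Suc n)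
  then show ?case
    by (simp add: bw_shift_def wprod_Suc)
qed simp

lemma bw_shift_power_diff:
  "(bw_shift w ^^ n) (seq_diff x y) = seq_diff ((bw_shift w ^^ n) x) ((bw_shift w ^^ n) y)"
  by (simp add: fun_eq_iff bw_shift_power_apply seq_diff_def algebra_simps)

lemma norm_wprod_le:
  assumes "\<forall>j\<ge>1. norm (w j) \<le> K" "1 \<le> K"
  shows "norm (wprod w m n) \<le> K ^ n"
proof (induction n arbitrary: m)
  case (Suc n)
  have "norm (wprod w m (Suc n)) = norm (w (m+2)) * norm (wprod w (Suc m) n)"
    by (simp add: wprod_Suc norm_mult)
  also have "\<dots> \<le> K * K ^ n"
    using assms Suc[of "Suc m"] by (intro mult_mono) auto
  finally show ?case
    by simp
qed simp

lemma SUP_ereal_eq_infinity_iff: "(SUP i\<in>A. ereal (f i)) = \<infinity> \<longleftrightarrow> (\<forall>B. \<exists>i\<in>A. B < f i)"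
proof -
  have "(SUP i\<in>A. ereal (f i)) = \<infinity> \<longleftrightarrow> (\<forall>x<top. \<exists>i\<in>A. x < ereal (f i))"
    unfolding top_ereal_def[symmetric] by (rule SUP_eq_top_iff)
  also have "\<dots> \<longleftrightarrow> (\<forall>B. \<exists>i\<in>A. B < f i)"
  proof
    assume H: "\<forall>x<top. \<exists>i\<in>A. x < ereal (f i)"
    show "\<forall>B. \<exists>i\<in>A. B < f i"
    proof
      fix B
      have "ereal B < top"
        by (simp add: top_ereal_def)
      with H obtain i where "i \<in> A" "ereal B < ereal (f i)"
        by blast
      then show "\<exists>i\<in>A. B < f i"
        by auto
    qed
  next
    assume H: "\<forall>B. \<exists>i\<in>A. B < f i"
    show "\<forall>x<top. \<exists>i\<in>A. x < ereal (f i)"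
    proof (intro allI impI)
      fix x :: ereal
      assume "x < top"
      then obtain B where "x \<le> ereal B"
        by (cases x) (auto simp: top_ereal_def)
      moreover obtain i where "i \<in> A" "B < f i"
        using H by blast
      ultimately show "\<exists>i\<in>A. x < ereal (f i)"
        using le_less_trans[of x "ereal B" "ereal (f i)"] by auto
    qed
  qed
  finally show ?thesis .
qed

lemma prod_norm_eq_norm_wprod:
  assumes "1 \<le> k"
  shows "(\<Prod>j\<in>{k + 1 .. n + k + 1}. norm (w j)) = norm (wprod w (k - 1) (n + 1))"
proof -
  have "(k - 1) + 2 = k + 1" "(k - 1) + (n + 1) + 1 = n + k + 1"
    using assms by auto
  then show ?thesis
    unfolding wprod_def prod_norm[symmetric] by (simp add: add.commute)
qed

lemma two_le_if_norm_wprod_gt: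
  assumes "\<forall>j\<ge>1. norm (w j) \<le> K" "1 \<le> K" "K < norm (wprod w m n)"
  shows "2 \<le> n"
proof (rule ccontr)
  assume "\<not> 2 \<le> n"
  then consider "n = 0" | "n = 1"
    by linarith
  then have "norm (wprod w m n) \<le> K"
    using assms(1,2) by cases (simp_all add: wprod_Suc[of w m 0, simplified])
  with assms(3) show False
    by simp
qed

text \<open>Products of length 0 and 1 are not covered by condition (1), but they are bounded by \<open>K\<close>.\<close>

lemma SUP_prod_eq_infinity_iff:
  fixes w :: "nat \<Rightarrow> 'a::real_normed_field"
  assumes K: "1 \<le> K" and wK: "\<forall>j\<ge>1. norm (w j) \<le> K"
  shows "(SUP kn \<in> {(k, n). k \<ge> 1 \<and> n \<ge> 1}.
            ereal (\<Prod>j\<in>{fst kn + 1 .. snd kn + fst kn + 1}. norm (w j))) = \<infinity>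
     \<longleftrightarrow> (\<forall>B. \<exists>m n. B < norm (wprod w m n))"
proof -
  have "(\<forall>B. \<exists>kn\<in>{(k, n). k \<ge> 1 \<and> n \<ge> 1}. B < (\<Prod>j\<in>{fst kn + 1 .. snd kn + fst kn + 1}. norm (w j)))
     \<longleftrightarrow> (\<forall>B. \<exists>m n. B < norm (wprod w m n))"
  proof
    assume "\<forall>B. \<exists>kn\<in>{(k, n). k \<ge> 1 \<and> n \<ge> 1}. B < (\<Prod>j\<in>{fst kn + 1 .. snd kn + fst kn + 1}. norm (w j))"
    then show "\<forall>B. \<exists>m n. B < norm (wprod w m n)"
      using prod_norm_eq_norm_wprod[of _ w] by fastforce
  next
    assume H: "\<forall>B. \<exists>m n. B < norm (wprod w m n)"
    show "\<forall>B. \<exists>kn\<in>{(k, n). k \<ge> 1 \<and> n \<ge> 1}. B < (\<Prod>j\<in>{fst kn + 1 .. snd kn + fst kn + 1}. norm (w j))"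
    proof
      fix B
      obtain m n where mn: "max B K < norm (wprod w m n)"
        using H by blast
      then obtain n' where "n = n' + 2"
        using two_le_if_norm_wprod_gt[OF wK K, of m n] by (metis add.commute le_Suc_ex max.strict_boundedE)
      then have "B < (\<Prod>j\<in>{(m + 1) + 1 .. (n' + 1) + (m + 1) + 1}. norm (w j))"
        using mn prod_norm_eq_norm_wprod[of "m + 1" w "n' + 1"] by simp
      then show "\<exists>kn\<in>{(k, n). k \<ge> 1 \<and> n \<ge> 1}. B < (\<Prod>j\<in>{fst kn + 1 .. snd kn + fst kn + 1}. norm (w j))"
        by (intro bexI[of _ "(m + 1, n' + 1)"]) auto
    qed
  qed
  then show ?thesis
    by (simp only: SUP_ereal_eq_infinity_iff)
qed

context seq_space
begin

lemma bw_shift_power_mem: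
  assumes "\<forall>j\<ge>1. norm (w j) \<le> K" "1 \<le> K" "y \<in> X"
  shows "(bw_shift w ^^ n) y \<in> X"
proof (rule dominated_mem[OF assms(3)])
  show "norm ((bw_shift w ^^ n) y i) \<le> K ^ n * norm (y (i + n))" for i
    using norm_wprod_le[OF assms(1,2), of i n]
    by (simp add: bw_shift_power_apply norm_mult mult_right_mono)
qed (use assms(2) in simp)

end

section \<open>Bounded weight products\<close>

lemma tendsto_zero_if_liminf_zero:
  fixes f :: "nat \<Rightarrow> real"
  assumes nonneg: "\<And>n. 0 \<le> f n" and "0 \<le> C"
    and quasi_decreasing: "\<And>n m. n \<le> m \<Longrightarrow> f m \<le> C * f n"
    and liminf: "liminf (\<lambda>n. ereal (f n)) = 0"
  shows "f \<longlonglongrightarrow> 0"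
proof (rule LIMSEQ_I)
  fix r :: real
  assume "0 < r"
  define \<epsilon> where "\<epsilon> = r / (C + 1)"
  have "0 < \<epsilon>"
    using \<open>0 < r\<close> \<open>0 \<le> C\<close> by (simp add: \<epsilon>_def)
  have "\<exists>n0. f n0 < \<epsilon>"
  proof (rule ccontr)
    assume "\<nexists>n0. f n0 < \<epsilon>"
    then have "ereal \<epsilon> \<le> liminf (\<lambda>n. ereal (f n))"
      by (intro Liminf_bounded) (auto simp: not_less)
    with liminf \<open>0 < \<epsilon>\<close> show False
      by simp
  qed
  then obtain n0 where n0: "f n0 < \<epsilon>"
    by blast
  have "norm (f m - 0) < r" if "n0 \<le> m" for m
  proof -
    have "f m \<le> C * \<epsilon>"
      using quasi_decreasing[OF that] n0 \<open>0 \<le> C\<close> by (meson less_imp_le mult_left_mono order_trans)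
    also have "\<dots> < r"
      using \<open>0 < r\<close> \<open>0 \<le> C\<close> by (simp add: \<epsilon>_def field_simps)
    finally show ?thesis
      using nonneg[of m] by simp
  qed
  then show "\<exists>n0. \<forall>m\<ge>n0. norm (f m - 0) < r"
    by blast
qed

lemma uncountable_has_two_points:
  assumes "uncountable S"
  obtains x y where "x \<in> S" "y \<in> S" "x \<noteq> y"
proof -
  have "S \<noteq> {}"
    using assms by auto
  then obtain x where "x \<in> S"
    by blast
  moreover have "S \<noteq> {x}"
    using assms by auto
  ultimately show thesis
    using that by blast
qed

context seq_space
begin

lemma dense_in_space_nonzero:
  assumes "dense_in_space X N M"
  obtains d where "d \<in> M" "d \<noteq> (\<lambda>n. 0)"
proof -
  obtain d where d: "d \<in> M" "N (seq_diff (unit_seq 0) d) < 1"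
    using assms unit_seq_mem[of 0] zero_less_one unfolding dense_in_space_def by blast
  have "d \<noteq> (\<lambda>n. 0)"
  proof
    assume "d = (\<lambda>n. 0)"
    then have "seq_diff (unit_seq 0) d = unit_seq 0"
      by (simp add: seq_diff_def)
    with d norm_coord_le[OF unit_seq_mem, of 0 0] show False
      by (simp add: unit_seq_def)
  qed
  with d that show thesis
    by blast
qed

context
  fixes w :: "nat \<Rightarrow> 'a" and C :: real
  assumes wprod_bounded: "\<And>m n. norm (wprod w m n) \<le> C"
begin

lemma bound_nonneg: "0 \<le> C"
  using wprod_bounded[of 0 0] by simp

lemma norm_bw_shift_power_apply_le: "norm ((bw_shift w ^^ n) y i) \<le> C * norm (y (i + n))"
  by (simp add: bw_shift_power_apply norm_mult mult_right_mono wprod_bounded)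

lemma bw_shift_power_bounded_mem: "y \<in> X \<Longrightarrow> (bw_shift w ^^ n) y \<in> X"
  using bound_nonneg norm_bw_shift_power_apply_le by (rule dominated_mem[rotated])

lemma N_bw_shift_power_le: "y \<in> X \<Longrightarrow> N ((bw_shift w ^^ n) y) \<le> C * N y"
  using bound_nonneg norm_bw_shift_power_apply_le by (rule dominated_le[rotated])

lemma N_bw_shift_power_quasi_decreasing:
  assumes "y \<in> X" "n \<le> m"
  shows "N ((bw_shift w ^^ m) y) \<le> C * N ((bw_shift w ^^ n) y)"
proof -
  have "(bw_shift w ^^ m) y = (bw_shift w ^^ (m - n)) ((bw_shift w ^^ n) y)"
    using assms(2) by (metis funpow_add le_add_diff_inverse2 o_apply)
  then show ?thesis
    using N_bw_shift_power_le bw_shift_power_bounded_mem assms(1) by simp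
qed

lemma not_li_yorke_pair_if_bounded:
  assumes "x \<in> X" "y \<in> X"
  shows "\<not> li_yorke_pair N (bw_shift w) x y"
proof
  define f where "f n = N ((bw_shift w ^^ n) (seq_diff x y))" for n
  have z: "seq_diff x y \<in> X"
    using assms by (rule diff_mem)
  assume "li_yorke_pair N (bw_shift w) x y"
  then have liminf: "liminf (\<lambda>n. ereal (f n)) = 0" and limsup: "limsup (\<lambda>n. ereal (f n)) > 0"
    unfolding li_yorke_pair_def f_def bw_shift_power_diff by auto
  have "f \<longlonglongrightarrow> 0"
    using N_nonneg bw_shift_power_bounded_mem z bound_nonneg N_bw_shift_power_quasi_decreasing z liminf
    unfolding f_def by (intro tendsto_zero_if_liminf_zero) auto
  then have "(\<lambda>n. ereal (f n)) \<longlonglongrightarrow> ereal 0"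
    by (rule tendsto_ereal)
  then have "limsup (\<lambda>n. ereal (f n)) = 0"
    by (simp add: lim_imp_Limsup zero_ereal_def)
  with limsup show False
    by simp
qed

lemma not_irregular_if_bounded:
  assumes "x \<in> X"
  shows "\<not> irregular_vec N (bw_shift w) x"
proof
  have "limsup (\<lambda>n. ereal (N ((bw_shift w ^^ n) x))) \<le> ereal (C * N x)"
    by (intro Limsup_bounded) (use N_bw_shift_power_le[OF assms] in simp)
  moreover assume "irregular_vec N (bw_shift w) x"
  ultimately show False
    by (simp add: irregular_vec_def)
qed

lemma not_uniformly_scrambled_if_bounded: "\<not> uniformly_li_yorke_scrambled X N (bw_shift w) S"
proof
  assume scrambled: "uniformly_li_yorke_scrambled X N (bw_shift w) S"
  then obtain x y where xy: "x \<in> S" "y \<in> S" "x \<noteq> y" and "S \<subseteq> X"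
    unfolding uniformly_li_yorke_scrambled_def by blast
  then have z: "seq_diff x y \<in> X"
    by (intro diff_mem) auto
  from scrambled xy obtain q where
    "filterlim (\<lambda>n. N ((bw_shift w ^^ q n) (seq_diff x y))) at_top sequentially"
    unfolding uniformly_li_yorke_scrambled_def bw_shift_power_diff by blast
  then obtain n where "C * N (seq_diff x y) + 1 \<le> N ((bw_shift w ^^ q n) (seq_diff x y))"
    unfolding filterlim_at_top eventually_sequentially by blast
  with N_bw_shift_power_le[OF z, of "q n"] show False
    by linarith
qed

lemma not_li_yorke_chaotic_if_bounded: "\<not> li_yorke_chaotic X N (bw_shift w)"
proof
  assume "li_yorke_chaotic X N (bw_shift w)"
  then obtain S where S: "S \<subseteq> X" "uncountable S"
    and pairs: "\<forall>x\<in>S. \<forall>y\<in>S. x \<noteq> y \<longrightarrow> li_yorke_pair N (bw_shift w) x y"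
    unfolding li_yorke_chaotic_def by blast
  obtain x y where "x \<in> S" "y \<in> S" "x \<noteq> y"
    using S(2) by (rule uncountable_has_two_points)
  with S(1) pairs not_li_yorke_pair_if_bounded show False
    by blast
qed

lemma not_densely_uniformly_li_yorke_chaotic_if_bounded:
  "\<not> densely_uniformly_li_yorke_chaotic X N (bw_shift w)"
  unfolding densely_uniformly_li_yorke_chaotic_def using not_uniformly_scrambled_if_bounded by blast

lemma not_dense_irregular_manifold_if_bounded: "\<not> dense_irregular_manifold X N (bw_shift w)"
proof
  assume "dense_irregular_manifold X N (bw_shift w)"
  then obtain M where M: "dense_in_space X N M"
    and irregular: "\<forall>x\<in>M. x \<noteq> (\<lambda>n. 0) \<longrightarrow> irregular_vec N (bw_shift w) x"
    unfolding dense_irregular_manifold_def by blast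
  obtain d where "d \<in> M" "d \<noteq> (\<lambda>n. 0)"
    using M by (rule dense_in_space_nonzero)
  moreover have "M \<subseteq> X"
    using M by (simp add: dense_in_space_def)
  ultimately show False
    using irregular not_irregular_if_bounded by blast
qed

end

end

section \<open>Unbounded weight products\<close>

lemma obtain_lowest_nonzero:
  fixes \<beta> :: "nat \<Rightarrow> 'a::zero"
  assumes "finite F" "\<exists>r\<in>F. \<beta> r \<noteq> 0"
  obtains r0 where "r0 \<in> F" "\<beta> r0 \<noteq> 0" "\<And>r. r \<in> F \<Longrightarrow> \<beta> r \<noteq> 0 \<Longrightarrow> r0 \<le> r"
proof -
  let ?S = "{r\<in>F. \<beta> r \<noteq> 0}"
  have "finite ?S" "?S \<noteq> {}"
    using assms by auto
  then show thesis
    using that[of "Min ?S"] Min_in[of ?S] by simp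
qed

lemma norm_poly_ge_lowest_term:
  fixes b :: "nat \<Rightarrow> 'a::real_normed_field" and t :: real
  assumes F: "finite F" and r0: "r0 \<in> F" and lowest: "\<And>r. r \<in> F \<Longrightarrow> b r \<noteq> 0 \<Longrightarrow> r0 \<le> r"
    and t: "0 \<le> t" "t \<le> 1" and small: "t * (\<Sum>r\<in>F. norm (b r)) \<le> norm (b r0) / 2"
  shows "t ^ r0 * (norm (b r0) / 2) \<le> norm (\<Sum>r\<in>F. b r * of_real t ^ r)"
proof -
  have higher: "norm (b r * of_real t ^ r) \<le> t ^ r0 * t * norm (b r)" if "r \<in> F - {r0}" for r
  proof (cases "b r = 0")
    case False
    then have "r0 < r"
      using lowest that by force
    then have "t ^ r \<le> t ^ Suc r0"
      using t by (intro power_decreasing) auto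
    then have "t ^ r * norm (b r) \<le> (t * t ^ r0) * norm (b r)"
      by (intro mult_right_mono) auto
    then show ?thesis
      using t by (simp add: norm_mult norm_power algebra_simps)
  qed simp
  have "norm (\<Sum>r\<in>F - {r0}. b r * of_real t ^ r) \<le> (\<Sum>r\<in>F - {r0}. t ^ r0 * t * norm (b r))"
    by (rule order_trans[OF norm_sum sum_mono]) (use higher in auto)
  also have "\<dots> = t ^ r0 * (t * (\<Sum>r\<in>F - {r0}. norm (b r)))"
    by (simp add: sum_distrib_left mult.assoc)
  also have "\<dots> \<le> t ^ r0 * (t * (\<Sum>r\<in>F. norm (b r)))"
    using F t by (intro mult_left_mono sum_mono2) auto
  also have "\<dots> \<le> t ^ r0 * (norm (b r0) / 2)"
    using small t by (intro mult_left_mono) auto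
  finally have rest: "norm (\<Sum>r\<in>F - {r0}. b r * of_real t ^ r) \<le> t ^ r0 * (norm (b r0) / 2)" .
  have "(\<Sum>r\<in>F. b r * of_real t ^ r) = b r0 * of_real t ^ r0 + (\<Sum>r\<in>F - {r0}. b r * of_real t ^ r)"
    using F r0 by (simp add: sum.remove)
  moreover have "norm (b r0 * of_real t ^ r0) = t ^ r0 * norm (b r0)"
    using t by (simp add: norm_mult norm_power)
  ultimately show ?thesis
    using rest norm_triangle_ineq2[of "b r0 * of_real t ^ r0" "- (\<Sum>r\<in>F - {r0}. b r * of_real t ^ r)"]
    by (simp add: algebra_simps)
qed

locale unbounded_weights = seq_space X N for X :: "(nat \<Rightarrow> 'a::real_normed_field) set" and N +
  fixes w :: "nat \<Rightarrow> 'a" and K :: real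
  assumes K_ge_1: "1 \<le> K" and norm_w_le: "\<forall>j\<ge>1. norm (w j) \<le> K"
    and wprod_unbounded: "\<forall>B. \<exists>m n. B < norm (wprod w m n)"
begin

lemma bw_shift_power_closed: "y \<in> X \<Longrightarrow> (bw_shift w ^^ n) y \<in> X"
  using bw_shift_power_mem[OF norm_w_le K_ge_1] .

lemma exists_long_large_wprod: "\<exists>m n. B \<le> norm (wprod w m n) \<and> L \<le> n"
proof -
  obtain m n where mn: "max B (K ^ L) < norm (wprod w m n)"
    using wprod_unbounded by blast
  have "L \<le> n"
  proof (rule ccontr)
    assume "\<not> L \<le> n"
    then have "K ^ n \<le> K ^ L"
      using K_ge_1 by (intro power_increasing) auto
    with norm_wprod_le[OF norm_w_le K_ge_1, of m n] mn show False
      by simp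
  qed
  with mn show ?thesis
    by (intro exI[of _ m] exI[of _ n]) auto
qed

definition large_block :: "real \<Rightarrow> nat \<Rightarrow> nat \<times> nat" where
  "large_block B L = (SOME (m, n). B \<le> norm (wprod w m n) \<and> L \<le> n)"

lemma large_block:
  assumes "large_block B L = (m, n)"
  shows "B \<le> norm (wprod w m n)" "L \<le> n"
proof -
  have "case large_block B L of (m, n) \<Rightarrow> B \<le> norm (wprod w m n) \<and> L \<le> n"
    unfolding large_block_def by (rule someI_ex) (use exists_long_large_wprod in auto)
  with assms show "B \<le> norm (wprod w m n)" "L \<le> n"
    by simp_all
qed

text \<open>The coefficient is chosen before the block, small enough that the first
  \<^term>\<open>prev_spike l + 1\<close> iterates cannot enlarge it much; the block is then chosen so
  that \<open>block_len l\<close> iterates carry the spike to \<open>block_start l\<close> magnified by a weight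
  product of size at least \<open>(l+1)\<^sup>l\<^sup>+\<^sup>1 / coef l\<close>.\<close>

definition coef_for :: "nat \<Rightarrow> nat \<Rightarrow> real" where
  "coef_for l J = (1/4) ^ (l + 1) / K ^ (J + 1)"

definition next_block :: "nat \<Rightarrow> nat \<Rightarrow> nat \<times> nat" where
  "next_block l J = large_block (real (l + 1) ^ (l + 1) / coef_for l J) (J + 1)"

primrec block :: "nat \<Rightarrow> nat \<times> nat" where
  "block 0 = next_block 0 0"
| "block (Suc l) = next_block (Suc l) (fst (block l) + snd (block l))"

definition block_start :: "nat \<Rightarrow> nat" where
  "block_start l = fst (block l)"

definition block_len :: "nat \<Rightarrow> nat" where
  "block_len l = snd (block l)"

definition spike_pos :: "nat \<Rightarrow> nat" where
  "spike_pos l = block_start l + block_len l"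

definition prev_spike :: "nat \<Rightarrow> nat" where
  "prev_spike l = (case l of 0 \<Rightarrow> 0 | Suc k \<Rightarrow> spike_pos k)"

definition coef :: "nat \<Rightarrow> real" where
  "coef l = coef_for l (prev_spike l)"

lemma block_eq: "block l = next_block l (prev_spike l)"
  by (cases l) (simp_all add: prev_spike_def spike_pos_def block_start_def block_len_def)

lemma coef_wprod_large: "real (l + 1) ^ (l + 1) \<le> coef l * norm (wprod w (block_start l) (block_len l))"
  and prev_spike_less_block_len: "prev_spike l < block_len l"
proof -
  have "large_block (real (l + 1) ^ (l + 1) / coef l) (prev_spike l + 1) = (block_start l, block_len l)"
    using block_eq[of l] by (simp add: next_block_def coef_def block_start_def block_len_def)
  note large = large_block[OF this]
  moreover have "0 < coef l"
    using K_ge_1 by (simp add: coef_def coef_for_def)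
  ultimately show "real (l + 1) ^ (l + 1) \<le> coef l * norm (wprod w (block_start l) (block_len l))"
    and "prev_spike l < block_len l"
    by (simp_all add: divide_le_eq mult.commute)
qed

lemma coef_pos: "0 < coef l"
  using K_ge_1 by (simp add: coef_def coef_for_def)

lemma coef_times_K_power: "coef l * K ^ (prev_spike l + 1) = (1/4) ^ (l + 1)"
  using K_ge_1 by (simp add: coef_def coef_for_def)

lemma coef_le: "coef l \<le> (1/4) ^ (l + 1)"
proof -
  have "coef l * 1 \<le> coef l * K ^ (prev_spike l + 1)"
    using K_ge_1 coef_pos[of l] by (intro mult_left_mono one_le_power) auto
  also have "\<dots> = (1/4) ^ (l + 1)"
    by (rule coef_times_K_power)
  finally show ?thesis
    by simp
qed

lemma norm_wprod_times_coef_le: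
  assumes "n \<le> prev_spike l + 1"
  shows "norm (wprod w i n) * coef l \<le> (1/4) ^ (l + 1)"
proof -
  have "norm (wprod w i n) \<le> K ^ (prev_spike l + 1)"
    using norm_wprod_le[OF norm_w_le K_ge_1, of i n] power_increasing[OF assms K_ge_1] by linarith
  then have "norm (wprod w i n) * coef l \<le> K ^ (prev_spike l + 1) * coef l"
    using coef_pos[of l] by (intro mult_right_mono) auto
  then show ?thesis
    using coef_times_K_power[of l] by (simp add: mult.commute)
qed

lemma summable_coef: "summable coef"
proof (rule summable_comparison_test')
  show "summable (\<lambda>l. (1/4::real) ^ (l + 1))"
    using summable_ignore_initial_segment[OF summable_geometric[of "1/4::real"], of 1] by simp
  show "norm (coef l) \<le> (1/4) ^ (l + 1)" for l
    using coef_le[of l] coef_pos[of l] by simp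
qed

lemma spike_pos_less_Suc: "spike_pos l < spike_pos (Suc l)"
  using prev_spike_less_block_len[of "Suc l"] by (simp add: prev_spike_def spike_pos_def)

lemma strict_mono_spike_pos: "strict_mono spike_pos"
  using spike_pos_less_Suc by (rule strict_mono_Suc_iff[THEN iffD2, rule_format])

lemma strict_mono_block_len: "strict_mono block_len"
proof (rule strict_mono_Suc_iff[THEN iffD2], intro allI)
  fix l
  show "block_len l < block_len (Suc l)"
    using prev_spike_less_block_len[of "Suc l"] by (simp add: prev_spike_def spike_pos_def)
qed

lemma le_spike_pos: "l \<le> spike_pos l"
  using seq_suble[OF strict_mono_spike_pos] .

text \<open>After \<open>shrink_time k\<close> iterates, the spikes \<open>0, \<dots>, k\<close> have been shifted out of the
  sequence.\<close>

definition shrink_time :: "nat \<Rightarrow> nat" where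
  "shrink_time k = spike_pos k + 1"

lemma strict_mono_shrink_time: "strict_mono shrink_time"
  using strict_mono_spike_pos by (simp add: strict_mono_def shrink_time_def)

definition damping :: "nat \<Rightarrow> real" where
  "damping l = 1 / real (l + 1)"

lemma damping_bounds: "0 \<le> damping l" "damping l \<le> 1"
  by (auto simp: damping_def)

lemma damping_power_le_1: "damping l ^ r \<le> 1"
  using damping_bounds by (simp add: power_le_one)

definition spike_vec :: "nat \<Rightarrow> nat \<Rightarrow> 'a" where
  "spike_vec r = spread spike_pos (\<lambda>l. of_real (coef l) * of_real (damping l) ^ r)"

lemma spike_vec_at: "spike_vec r (spike_pos l) = of_real (coef l) * of_real (damping l) ^ r"
  by (simp add: spike_vec_def spread_at[OF strict_mono_spike_pos])

lemma spike_vec_mem: "spike_vec r \<in> X"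
  and N_spike_vec_le: "N (spike_vec r) \<le> (\<Sum>l. coef l)"
proof -
  have le: "norm (of_real (coef l) * of_real (damping l) ^ r :: 'a) \<le> coef l" for l
    using coef_pos[of l] damping_bounds[of l] damping_power_le_1[of l r]
    by (simp add: norm_mult norm_power mult_left_le)
  have s: "summable (\<lambda>l. norm (of_real (coef l) * of_real (damping l) ^ r :: 'a))"
    by (rule summable_comparison_test'[OF summable_coef]) (use le in auto)
  show "spike_vec r \<in> X"
    unfolding spike_vec_def using strict_mono_spike_pos s by (rule spread_mem)
  have "N (spike_vec r) \<le> (\<Sum>l. norm (of_real (coef l) * of_real (damping l) ^ r :: 'a))"
    unfolding spike_vec_def using strict_mono_spike_pos s by (rule norm_spread_le)
  also have "\<dots> \<le> (\<Sum>l. coef l)"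
    by (rule suminf_le[OF le s summable_coef])
  finally show "N (spike_vec r) \<le> (\<Sum>l. coef l)" .
qed

lemma norm_shrink_spike_vec_le:
  "norm ((bw_shift w ^^ shrink_time k) (spike_vec 0) i)
     \<le> norm (spread spike_pos (\<lambda>l. of_real ((1/2) ^ (k + 1) * (1/2) ^ l) :: 'a) (i + shrink_time k))"
proof (cases "i + shrink_time k \<in> range spike_pos")
  case False
  then show ?thesis
    by (simp add: bw_shift_power_apply spike_vec_def spread_outside)
next
  case True
  then obtain l where l: "i + shrink_time k = spike_pos l"
    by auto
  then have "spike_pos k < spike_pos l"
    by (simp add: shrink_time_def)
  then have "k < l"
    using strict_mono_spike_pos strict_mono_less by blast
  then have "shrink_time k \<le> prev_spike l + 1"
    using strict_mono_spike_pos
    by (auto simp: shrink_time_def prev_spike_def strict_mono_less_eq split: nat.split)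
  then have "norm (wprod w i (shrink_time k)) * coef l \<le> (1/4) ^ (l + 1)"
    by (rule norm_wprod_times_coef_le)
  also have "\<dots> = (1/2) ^ (l + 1) * (1/2) ^ (l + 1)"
    by (simp add: power_mult_distrib[symmetric])
  also have "\<dots> \<le> (1/2) ^ (k + 1) * (1/2) ^ l"
    using \<open>k < l\<close> by (intro mult_mono power_decreasing) auto
  finally have "norm (wprod w i (shrink_time k)) * coef l \<le> (1/2) ^ (k + 1) * (1/2) ^ l" .
  moreover have "norm ((bw_shift w ^^ shrink_time k) (spike_vec 0) i) = norm (wprod w i (shrink_time k)) * coef l"
    using coef_pos[of l] by (simp add: l bw_shift_power_apply spike_vec_at norm_mult)
  moreover have "norm (spread spike_pos (\<lambda>l. of_real ((1/2) ^ (k + 1) * (1/2) ^ l) :: 'a) (i + shrink_time k))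
      = (1/2) ^ (k + 1) * (1/2) ^ l"
    by (simp only: l spread_at[OF strict_mono_spike_pos] norm_of_real) simp
  ultimately show ?thesis
    by simp
qed

lemma N_shrink_spike_vec_le: "N ((bw_shift w ^^ shrink_time k) (spike_vec 0)) \<le> (1/2) ^ k"
proof -
  define v :: "nat \<Rightarrow> 'a" where "v = (\<lambda>l. of_real ((1/2) ^ (k + 1) * (1/2) ^ l))"
  have norm_v: "norm (v l) = (1/2) ^ (k + 1) * (1/2) ^ l" for l
    unfolding v_def by (simp only: norm_of_real) simp
  have sv: "summable (\<lambda>l. norm (v l))"
    unfolding norm_v by (intro summable_mult summable_geometric) simp
  have "N ((bw_shift w ^^ shrink_time k) (spike_vec 0)) \<le> 1 * N (spread spike_pos v)"
  proof (rule dominated_le[OF spread_mem[OF strict_mono_spike_pos sv]])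
    show "norm ((bw_shift w ^^ shrink_time k) (spike_vec 0) i)
        \<le> 1 * norm (spread spike_pos v (i + shrink_time k))" for i
      using norm_shrink_spike_vec_le[of k i] by (simp add: v_def)
  qed simp
  also have "\<dots> \<le> (\<Sum>l. norm (v l))"
    using norm_spread_le[OF strict_mono_spike_pos sv] by simp
  also have "\<dots> = (1/2) ^ (k + 1) * (\<Sum>l. (1/2::real) ^ l)"
    unfolding norm_v by (rule suminf_mult) (simp add: summable_geometric)
  also have "\<dots> = (1/2) ^ k"
    using suminf_geometric[of "1/2::real"] by simp
  finally show ?thesis .
qed

text \<open>Writing \<open>r = prod_encode (k, s)\<close>, the generator \<open>r\<close> is the unit vector \<open>e\<^sub>k\<close>
  perturbed by \<open>2\<^sup>-\<^sup>s\<close> times the spike vector \<open>r\<close>. Small perturbations of every \<open>e\<^sub>k\<close>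
  give density, and since the spike vectors carry distinct powers of the damping factors,
  a nonzero combination of generators is dominated near each spike by its lowest power.\<close>

definition unit_index :: "nat \<Rightarrow> nat" where
  "unit_index r = fst (prod_decode r)"

definition height :: "nat \<Rightarrow> real" where
  "height r = (1/2) ^ snd (prod_decode r)"

definition generator :: "nat \<Rightarrow> nat \<Rightarrow> 'a" where
  "generator r = (\<lambda>i. unit_seq (unit_index r) i + of_real (height r) * spike_vec r i)"

definition gen_span :: "(nat \<Rightarrow> 'a) set" where
  "gen_span = {y. \<exists>F \<beta>. finite F \<and> y = (\<lambda>i. \<Sum>r\<in>F. \<beta> r * generator r i)}"

lemma height_pos: "0 < height r"
  by (simp add: height_def)

lemma gen_spanI: "finite F \<Longrightarrow> (\<lambda>i. \<Sum>r\<in>F. \<beta> r * generator r i) \<in> gen_span"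
  unfolding gen_span_def by blast

lemma gen_spanE:
  assumes "y \<in> gen_span"
  obtains F \<beta> where "finite F" "y = (\<lambda>i. \<Sum>r\<in>F. \<beta> r * generator r i)"
  using assms unfolding gen_span_def by blast

lemma generator_mem: "generator r \<in> X"
  unfolding generator_def by (intro add_mem unit_seq_mem scale_mem spike_vec_mem)

lemma gen_span_subset: "gen_span \<subseteq> X"
proof
  fix y
  assume "y \<in> gen_span"
  then obtain F \<beta> where "finite F" "y = (\<lambda>i. \<Sum>r\<in>F. \<beta> r * generator r i)"
    by (rule gen_spanE)
  then show "y \<in> X"
    by (simp add: sum_mem scale_mem generator_mem)
qed

lemma sum_generator_extend:
  assumes "finite G" "F \<subseteq> G"
  shows "(\<Sum>r\<in>F. \<beta> r * generator r i) = (\<Sum>r\<in>G. (if r \<in> F then \<beta> r else 0) * generator r i)"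
proof -
  have "(\<Sum>r\<in>G. (if r \<in> F then \<beta> r else 0) * generator r i)
      = (\<Sum>r\<in>G. if r \<in> F then \<beta> r * generator r i else 0)"
    by (rule sum.cong) auto
  also have "\<dots> = (\<Sum>r\<in>G \<inter> F. \<beta> r * generator r i)"
    using sum.inter_restrict[OF assms(1)] by metis
  also have "G \<inter> F = F"
    using assms(2) by blast
  finally show ?thesis
    by simp
qed

lemma gen_span_add:
  assumes "x \<in> gen_span" "y \<in> gen_span"
  shows "(\<lambda>i. x i + y i) \<in> gen_span"
proof -
  obtain F1 \<beta>1 where F1: "finite F1" and x: "x = (\<lambda>i. \<Sum>r\<in>F1. \<beta>1 r * generator r i)"
    using assms(1) by (rule gen_spanE)
  obtain F2 \<beta>2 where F2: "finite F2" and y: "y = (\<lambda>i. \<Sum>r\<in>F2. \<beta>2 r * generator r i)"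
    using assms(2) by (rule gen_spanE)
  define \<gamma> where "\<gamma> r = (if r \<in> F1 then \<beta>1 r else 0) + (if r \<in> F2 then \<beta>2 r else 0)" for r
  have "x i + y i = (\<Sum>r\<in>F1 \<union> F2. \<gamma> r * generator r i)" for i
  proof -
    have "x i = (\<Sum>r\<in>F1 \<union> F2. (if r \<in> F1 then \<beta>1 r else 0) * generator r i)"
      unfolding x by (rule sum_generator_extend) (use F1 F2 in auto)
    moreover have "y i = (\<Sum>r\<in>F1 \<union> F2. (if r \<in> F2 then \<beta>2 r else 0) * generator r i)"
      unfolding y by (rule sum_generator_extend) (use F1 F2 in auto)
    ultimately show ?thesis
      by (simp only: \<gamma>_def distrib_right sum.distrib)
  qed
  then show ?thesis
    using gen_spanI[of "F1 \<union> F2" \<gamma>] F1 F2 by simp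
qed

lemma gen_span_scale:
  assumes "x \<in> gen_span"
  shows "(\<lambda>i. c * x i) \<in> gen_span"
proof -
  obtain F \<beta> where F: "finite F" and x: "x = (\<lambda>i. \<Sum>r\<in>F. \<beta> r * generator r i)"
    using assms by (rule gen_spanE)
  then have "(\<lambda>i. c * x i) = (\<lambda>i. \<Sum>r\<in>F. (c * \<beta> r) * generator r i)"
    by (simp add: sum_distrib_left mult.assoc)
  then show ?thesis
    using gen_spanI[OF F] by simp
qed

lemma gen_span_diff: "x \<in> gen_span \<Longrightarrow> y \<in> gen_span \<Longrightarrow> seq_diff x y \<in> gen_span"
  using gen_span_add[OF _ gen_span_scale, of x y "-1"] by (simp add: seq_diff_def)

lemma seq_subspace_gen_span: "seq_subspace gen_span"
  unfolding seq_subspace_def using gen_spanI[of "{}"] gen_span_add gen_span_scale by simp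

definition unit_bound :: "nat set \<Rightarrow> nat" where
  "unit_bound F = (\<Sum>r\<in>F. unit_index r + 1)"

lemma sum_generator_beyond_units:
  assumes F: "finite F" and i: "unit_bound F \<le> i"
  shows "(\<Sum>r\<in>F. \<beta> r * generator r i) = (\<Sum>r\<in>F. \<beta> r * of_real (height r) * spike_vec r i)"
proof (rule sum.cong[OF refl])
  fix r
  assume "r \<in> F"
  then have "unit_index r < i"
    using member_le_sum[of r F "\<lambda>r. unit_index r + 1"] F i by (simp add: unit_bound_def)
  then show "\<beta> r * generator r i = \<beta> r * of_real (height r) * spike_vec r i"
    by (simp add: generator_def unit_seq_def algebra_simps)
qed

lemma sum_generator_at_spike:
  assumes "finite F" "unit_bound F \<le> spike_pos l"
  shows "(\<Sum>r\<in>F. \<beta> r * generator r (spike_pos l))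
    = of_real (coef l) * (\<Sum>r\<in>F. \<beta> r * of_real (height r) * of_real (damping l) ^ r)"
  unfolding sum_generator_beyond_units[OF assms]
  by (simp add: spike_vec_at sum_distrib_left algebra_simps)

lemma norm_sum_generator_le:
  assumes F: "finite F" and i: "unit_bound F \<le> i"
  shows "norm (\<Sum>r\<in>F. \<beta> r * generator r i)
    \<le> (\<Sum>r\<in>F. norm (\<beta> r * of_real (height r))) * norm (spike_vec 0 i)"
proof (cases "i \<in> range spike_pos")
  case False
  then show ?thesis
    unfolding sum_generator_beyond_units[OF assms] by (simp add: spike_vec_def spread_outside)
next
  case True
  then obtain l where l: "i = spike_pos l"
    by auto
  have "norm (\<Sum>r\<in>F. \<beta> r * of_real (height r) * of_real (damping l) ^ r)
      \<le> (\<Sum>r\<in>F. norm (\<beta> r * of_real (height r)))"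
  proof (rule order_trans[OF norm_sum sum_mono])
    fix r
    show "norm (\<beta> r * of_real (height r) * of_real (damping l) ^ r) \<le> norm (\<beta> r * of_real (height r))"
      using damping_bounds[of l] damping_power_le_1[of l r]
      by (simp add: norm_mult norm_power mult_left_le)
  qed
  then show ?thesis
    using coef_pos[of l] sum_generator_at_spike[OF F i[unfolded l], of \<beta>]
    by (simp add: l norm_mult spike_vec_at mult.commute mult_left_mono)
qed

lemma N_shrink_sum_generator_le:
  assumes F: "finite F" and k: "unit_bound F \<le> k"
  shows "N ((bw_shift w ^^ shrink_time k) (\<lambda>i. \<Sum>r\<in>F. \<beta> r * generator r i))
    \<le> (\<Sum>r\<in>F. norm (\<beta> r * of_real (height r))) * (1/2) ^ k"
proof -
  define B where "B = (\<Sum>r\<in>F. norm (\<beta> r * of_real (height r)))"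
  have B: "0 \<le> B"
    unfolding B_def by (simp add: sum_nonneg)
  have "unit_bound F \<le> i + shrink_time k" for i
    using k le_spike_pos[of k] by (simp add: shrink_time_def)
  then have "norm ((bw_shift w ^^ shrink_time k) (\<lambda>i. \<Sum>r\<in>F. \<beta> r * generator r i) i)
      \<le> B * norm ((bw_shift w ^^ shrink_time k) (spike_vec 0) (i + 0))" for i
    using norm_sum_generator_le[OF F, of "i + shrink_time k" \<beta>]
    by (simp add: B_def bw_shift_power_apply norm_mult mult_left_mono mult.left_commute)
  then have "N ((bw_shift w ^^ shrink_time k) (\<lambda>i. \<Sum>r\<in>F. \<beta> r * generator r i))
      \<le> B * N ((bw_shift w ^^ shrink_time k) (spike_vec 0))"
    by (rule dominated_le[OF bw_shift_power_closed[OF spike_vec_mem] B])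
  also have "\<dots> \<le> B * (1/2) ^ k"
    using B N_shrink_spike_vec_le by (rule mult_left_mono[rotated])
  finally show ?thesis
    unfolding B_def .
qed

lemma gen_span_shrinks:
  assumes "y \<in> gen_span"
  shows "(\<lambda>k. N ((bw_shift w ^^ shrink_time k) y)) \<longlonglongrightarrow> 0"
proof -
  obtain F \<beta> where F: "finite F" and y: "y = (\<lambda>i. \<Sum>r\<in>F. \<beta> r * generator r i)"
    using assms by (rule gen_spanE)
  define B where "B = (\<Sum>r\<in>F. norm (\<beta> r * of_real (height r)))"
  show ?thesis
  proof (rule tendsto_sandwich)
    show "\<forall>\<^sub>F k in sequentially. 0 \<le> N ((bw_shift w ^^ shrink_time k) y)"
      using assms gen_span_subset by (intro always_eventually allI N_nonneg bw_shift_power_closed) auto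
    show "\<forall>\<^sub>F k in sequentially. N ((bw_shift w ^^ shrink_time k) y) \<le> B * (1/2) ^ k"
      unfolding eventually_sequentially B_def y using N_shrink_sum_generator_le[OF F] by blast
    show "(\<lambda>k. B * (1/2::real) ^ k) \<longlonglongrightarrow> 0"
      by (intro tendsto_mult_right_zero LIMSEQ_realpow_zero) auto
  qed simp
qed

lemma damping_power_growth:
  assumes "r0 \<le> l"
  shows "real (l + 1) \<le> real (l + 1) ^ (l + 1) * damping l ^ r0"
proof -
  have "real (l + 1) ^ (l + 1) = real (l + 1) ^ (l + 1 - r0) * real (l + 1) ^ r0"
    using assms by (simp add: power_add[symmetric])
  then have "real (l + 1) ^ (l + 1) * damping l ^ r0 = real (l + 1) ^ (l + 1 - r0)"
    by (simp add: damping_def power_one_over)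
  moreover have "real (l + 1) ^ 1 \<le> real (l + 1) ^ (l + 1 - r0)"
    using assms by (intro power_increasing) auto
  ultimately show ?thesis
    by simp
qed

lemma N_blowup_sum_generator_ge:
  assumes F: "finite F" and r0: "r0 \<in> F" and lowest: "\<And>r. r \<in> F \<Longrightarrow> \<beta> r \<noteq> 0 \<Longrightarrow> r0 \<le> r"
    and l: "r0 \<le> l" "unit_bound F \<le> spike_pos l"
    and small: "damping l * (\<Sum>r\<in>F. norm (\<beta> r * of_real (height r)))
      \<le> norm (\<beta> r0 * of_real (height r0)) / 2"
  shows "real (l + 1) * (norm (\<beta> r0 * of_real (height r0)) / 2)
    \<le> N ((bw_shift w ^^ block_len l) (\<lambda>i. \<Sum>r\<in>F. \<beta> r * generator r i))"
proof -
  define b where "b r = \<beta> r * of_real (height r)" for r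
  define y where "y = (\<lambda>i. \<Sum>r\<in>F. \<beta> r * generator r i)"
  define poly where "poly = (\<Sum>r\<in>F. b r * of_real (damping l) ^ r)"
  have "b r \<noteq> 0 \<Longrightarrow> \<beta> r \<noteq> 0" for r
    by (simp add: b_def)
  then have lowest_term: "damping l ^ r0 * (norm (b r0) / 2) \<le> norm poly"
    unfolding poly_def using small lowest
    by (intro norm_poly_ge_lowest_term[OF F r0 _ damping_bounds]) (auto simp: b_def)
  have "real (l + 1) * (norm (b r0) / 2) \<le> (real (l + 1) ^ (l + 1) * damping l ^ r0) * (norm (b r0) / 2)"
    using damping_power_growth[OF l(1)] by (rule mult_right_mono) simp
  also have "\<dots> = real (l + 1) ^ (l + 1) * (damping l ^ r0 * (norm (b r0) / 2))"
    by (rule mult.assoc)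
  also have "\<dots> \<le> (coef l * norm (wprod w (block_start l) (block_len l))) * norm poly"
    using coef_wprod_large[of l] lowest_term damping_bounds[of l] coef_pos[of l]
    by (intro mult_mono) auto
  also have "\<dots> = norm ((bw_shift w ^^ block_len l) y (block_start l))"
    using sum_generator_at_spike[OF F l(2), of \<beta>] coef_pos[of l]
    by (simp add: y_def poly_def b_def bw_shift_power_apply norm_mult spike_pos_def mult.assoc)
  also have "\<dots> \<le> N ((bw_shift w ^^ block_len l) y)"
  proof (intro norm_coord_le bw_shift_power_closed)
    show "y \<in> X"
      unfolding y_def using gen_spanI[OF F] gen_span_subset by blast
  qed
  finally show ?thesis
    by (simp add: b_def y_def)
qed

lemma gen_span_nonzeroE:
  assumes "y \<in> gen_span" "y \<noteq> (\<lambda>i. 0)"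
  obtains F \<beta> r0 where "finite F" "y = (\<lambda>i. \<Sum>r\<in>F. \<beta> r * generator r i)"
    "r0 \<in> F" "\<beta> r0 \<noteq> 0" "\<And>r. r \<in> F \<Longrightarrow> \<beta> r \<noteq> 0 \<Longrightarrow> r0 \<le> r"
proof -
  obtain F \<beta> where F: "finite F" and y: "y = (\<lambda>i. \<Sum>r\<in>F. \<beta> r * generator r i)"
    using assms(1) by (rule gen_spanE)
  have "\<exists>r\<in>F. \<beta> r \<noteq> 0"
  proof (rule ccontr)
    assume "\<not> (\<exists>r\<in>F. \<beta> r \<noteq> 0)"
    then have "y = (\<lambda>i. 0)"
      unfolding y by (simp add: fun_eq_iff)
    with assms(2) show False ..
  qed
  then obtain r0 where "r0 \<in> F" "\<beta> r0 \<noteq> 0" "\<And>r. r \<in> F \<Longrightarrow> \<beta> r \<noteq> 0 \<Longrightarrow> r0 \<le> r"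
    using obtain_lowest_nonzero[OF F] by metis
  with F y that show thesis
    by blast
qed

lemma gen_span_blows_up:
  assumes "y \<in> gen_span" "y \<noteq> (\<lambda>i. 0)"
  shows "filterlim (\<lambda>l. N ((bw_shift w ^^ block_len l) y)) at_top sequentially"
proof -
  obtain F \<beta> r0 where F: "finite F" and y: "y = (\<lambda>i. \<Sum>r\<in>F. \<beta> r * generator r i)"
    and r0: "r0 \<in> F" "\<beta> r0 \<noteq> 0" and lowest: "\<And>r. r \<in> F \<Longrightarrow> \<beta> r \<noteq> 0 \<Longrightarrow> r0 \<le> r"
    using assms by (rule gen_span_nonzeroE) blast
  define c where "c = norm (\<beta> r0 * of_real (height r0)) / 2"
  have "height r0 \<noteq> 0"
    using height_pos less_irrefl by metis
  with r0(2) have "0 < c"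
    by (simp add: c_def)
  have "(\<lambda>l. damping l * (\<Sum>r\<in>F. norm (\<beta> r * of_real (height r)))) \<longlonglongrightarrow> 0"
    unfolding damping_def using LIMSEQ_inverse_real_of_nat
    by (intro tendsto_mult_left_zero) (simp add: inverse_eq_divide)
  then have "\<forall>\<^sub>F l in sequentially. damping l * (\<Sum>r\<in>F. norm (\<beta> r * of_real (height r))) < c"
    using \<open>0 < c\<close> by (rule order_tendstoD(2))
  moreover have "\<forall>\<^sub>F l in sequentially. r0 \<le> l \<and> unit_bound F \<le> spike_pos l"
    unfolding eventually_sequentially
  proof (intro exI allI impI)
    fix l
    assume "r0 + unit_bound F \<le> l"
    then show "r0 \<le> l \<and> unit_bound F \<le> spike_pos l"
      using le_spike_pos[of l] by linarith
  qed
  ultimately have "\<forall>\<^sub>F l in sequentially. real l * c \<le> N ((bw_shift w ^^ block_len l) y)"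
  proof eventually_elim
    case (elim l)
    have "real l * c \<le> real (l + 1) * c"
      using \<open>0 < c\<close> by (intro mult_right_mono) auto
    also have "\<dots> \<le> N ((bw_shift w ^^ block_len l) y)"
      unfolding y c_def using elim less_imp_le
      by (intro N_blowup_sum_generator_ge[OF F r0(1) lowest]) (auto simp: c_def)
    finally show ?case .
  qed
  moreover have "filterlim (\<lambda>l. real l * c) at_top sequentially"
    by (rule filterlim_at_top_mult_tendsto_pos[OF tendsto_const \<open>0 < c\<close> filterlim_real_sequentially])
  ultimately show ?thesis
    by (rule filterlim_at_top_mono[rotated])
qed

lemma N_sum_spike_vec_le:
  "N (\<lambda>i. \<Sum>k<L. a k * spike_vec (enc k) i) \<le> 4 ^ L * ((\<Sum>k<L. norm (a k)) * (\<Sum>l. coef l))"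
proof -
  have "N (\<lambda>i. \<Sum>k<L. a k * spike_vec (enc k) i) \<le> 4 ^ L * (\<Sum>k<L. N (\<lambda>i. a k * spike_vec (enc k) i))"
    using N_sum_le[of "{..<L}" "\<lambda>k i. a k * spike_vec (enc k) i"] by (simp add: scale_mem spike_vec_mem)
  also have "\<dots> \<le> 4 ^ L * (\<Sum>k<L. norm (a k) * (\<Sum>l. coef l))"
  proof (intro mult_left_mono sum_mono)
    fix k
    have "N (\<lambda>i. a k * spike_vec (enc k) i) \<le> norm (a k) * N (spike_vec (enc k))"
      by (rule N_scale_le[OF spike_vec_mem])
    also have "\<dots> \<le> norm (a k) * (\<Sum>l. coef l)"
      using N_spike_vec_le by (rule mult_left_mono) simp
    finally show "N (\<lambda>i. a k * spike_vec (enc k) i) \<le> norm (a k) * (\<Sum>l. coef l)" .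
  qed simp
  finally show ?thesis
    by (simp add: sum_distrib_right)
qed

lemma gen_span_approx:
  assumes x: "x \<in> X"
  obtains d W where "d \<in> gen_span" "W \<in> X" "\<And>i. d i = (if i < L then x i else 0) + W i"
    "N W \<le> 4 ^ L * ((\<Sum>k<L. norm (x k)) * (\<Sum>l. coef l)) * (1/2) ^ s"
proof -
  define enc where "enc k = prod_encode (k, s)" for k
  have inj: "inj_on enc {..<L}"
    by (auto simp: inj_on_def enc_def)
  have enc: "unit_index (enc k) = k" "height (enc k) = (1/2) ^ s" for k
    by (simp_all add: unit_index_def height_def enc_def)
  define d where "d = (\<lambda>i. \<Sum>r\<in>enc ` {..<L}. x (unit_index r) * generator r i)"
  define W where "W = (\<lambda>i. \<Sum>k<L. (x k * of_real ((1/2) ^ s)) * spike_vec (enc k) i)"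
  have "d \<in> gen_span"
    unfolding d_def by (rule gen_spanI) simp
  moreover have "W \<in> X"
    unfolding W_def by (intro sum_mem scale_mem spike_vec_mem) auto
  moreover have "d i = (if i < L then x i else 0) + W i" for i
  proof -
    have "d i = (\<Sum>k<L. x k * generator (enc k) i)"
      unfolding d_def by (simp add: sum.reindex[OF inj] enc)
    also have "\<dots> = (\<Sum>k<L. x k * unit_seq k i) + W i"
      by (simp add: generator_def enc W_def distrib_left sum.distrib mult.assoc)
    also have "(\<Sum>k<L. x k * unit_seq k i) = (\<Sum>k<L. if k = i then x k else 0)"
      by (rule sum.cong) (auto simp: unit_seq_def)
    also have "\<dots> = (if i < L then x i else 0)"
      by simp
    finally show ?thesis .
  qed
  moreover have "N W \<le> 4 ^ L * ((\<Sum>k<L. norm (x k)) * (\<Sum>l. coef l)) * (1/2) ^ s"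
  proof -
    have "N W \<le> 4 ^ L * ((\<Sum>k<L. norm (x k * of_real ((1/2::real) ^ s))) * (\<Sum>l. coef l))"
      unfolding W_def by (rule N_sum_spike_vec_le)
    also have "(\<Sum>k<L. norm (x k * of_real ((1/2::real) ^ s))) = (\<Sum>k<L. norm (x k)) * (1/2) ^ s"
      by (simp only: norm_mult norm_of_real sum_distrib_right) simp
    finally show ?thesis
      by (simp add: mult_ac)
  qed
  ultimately show thesis
    using that by blast
qed

lemma gen_span_dense: "dense_in_space X N gen_span"
  unfolding dense_in_space_def
proof (intro conjI gen_span_subset ballI allI impI)
  fix x :: "nat \<Rightarrow> 'a" and e :: real
  assume x: "x \<in> X" and e: "0 < e"
  define tail where "tail = (\<lambda>L i. if i < L then 0 else x i)"
  obtain L where L: "N (tail L) < e / 8"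
    using tail_small[OF x, of "e / 8"] e by (auto simp: tail_def)
  define A where "A = 4 ^ L * ((\<Sum>k<L. norm (x k)) * (\<Sum>l. coef l))"
  have "(\<lambda>s. A * (1/2::real) ^ s) \<longlonglongrightarrow> 0"
    by (intro tendsto_mult_right_zero LIMSEQ_realpow_zero) auto
  then have "\<forall>\<^sub>F s in sequentially. A * (1/2) ^ s < e / 8"
    using e by (intro order_tendstoD(2)) auto
  then obtain s where s: "A * (1/2) ^ s < e / 8"
    unfolding eventually_sequentially by blast
  obtain d W where d: "d \<in> gen_span" and W: "W \<in> X"
    and d_eq: "\<And>i. d i = (if i < L then x i else 0) + W i" and NW: "N W \<le> A * (1/2) ^ s"
    using gen_span_approx[OF x, of L s] unfolding A_def by blast
  have tail_mem: "tail L \<in> X"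
  proof (rule dominated_mem[OF x])
    show "norm (tail L i) \<le> 1 * norm (x (i + 0))" for i
      by (simp add: tail_def)
  qed simp
  have "seq_diff x d = (\<lambda>i. tail L i + (-1) * W i)"
    by (simp add: seq_diff_def fun_eq_iff d_eq tail_def)
  then have "N (seq_diff x d) \<le> 4 * (N (tail L) + N (\<lambda>i. (-1) * W i))"
    using quasi_triangle[OF tail_mem scale_mem[OF W, of "-1"]] by (simp only:)
  also have "\<dots> < e"
    using L N_scale_le[OF W, of "-1"] NW s by simp
  finally show "\<exists>d\<in>gen_span. N (seq_diff x d) < e"
    using d by blast
qed

lemma generator_0_at_spike: "generator 0 (spike_pos 0) = of_real (coef 0)"
proof -
  have "prod_decode 0 = (0, 0)"
    by (simp add: prod_decode_def prod_decode_aux.simps)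
  moreover have "spike_pos 0 \<noteq> 0"
    using prev_spike_less_block_len[of 0] by (simp add: spike_pos_def)
  ultimately show ?thesis
    by (simp add: generator_def unit_index_def height_def unit_seq_def spike_vec_at)
qed

lemma generator_0_nonzero: "generator 0 \<noteq> (\<lambda>i. 0)"
  using generator_0_at_spike coef_pos[of 0] by (metis less_irrefl of_real_eq_0_iff)

lemma scaled_generator_0_mem: "(\<lambda>i. of_real a * generator 0 i) \<in> gen_span"
  using gen_spanI[of "{0}" "\<lambda>_. of_real a"] by simp

lemma uncountable_gen_span: "uncountable gen_span"
proof
  assume countable: "countable gen_span"
  define f where "f a = (\<lambda>i. of_real a * generator 0 i)" for a :: real
  have "inj f"
  proof
    fix a b
    assume "f a = f b"
    then have "f a (spike_pos 0) = f b (spike_pos 0)"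
      by simp
    then show "a = b"
      using coef_pos[of 0] by (simp add: f_def generator_0_at_spike)
  qed
  moreover have "range f \<subseteq> gen_span"
    using scaled_generator_0_mem by (auto simp: f_def)
  ultimately have "countable (UNIV :: real set)"
    using countable countable_subset countable_image_inj_on by blast
  then show False
    using uncountable_UNIV_real by blast
qed

lemma irregular_vec_gen_span:
  assumes "y \<in> gen_span" "y \<noteq> (\<lambda>i. 0)"
  shows "irregular_vec N (bw_shift w) y"
proof -
  define f where "f n = ereal (N ((bw_shift w ^^ n) y))" for n
  have "(f \<circ> shrink_time) \<longlonglongrightarrow> ereal 0"
    using tendsto_ereal[OF gen_span_shrinks[OF assms(1)]] by (simp add: f_def comp_def)
  then have "liminf f \<le> 0"
    using liminf_subseq_mono[OF strict_mono_shrink_time, of f] by (simp add: lim_imp_Liminf zero_ereal_def)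
  moreover have "0 \<le> liminf f"
    using assms(1) gen_span_subset
    by (intro Liminf_bounded always_eventually allI) (auto simp: f_def intro: N_nonneg bw_shift_power_closed)
  moreover have "(f \<circ> block_len) \<longlonglongrightarrow> \<infinity>"
    using gen_span_blows_up[OF assms] by (simp add: f_def comp_def tendsto_PInfty_eq_at_top)
  then have "limsup f = \<infinity>"
    using limsup_subseq_mono[OF strict_mono_block_len, of f]
    by (simp add: lim_imp_Limsup top_unique[where 'a=ereal, unfolded top_ereal_def])
  ultimately show ?thesis
    unfolding irregular_vec_def f_def by simp
qed

lemma li_yorke_pair_gen_span:
  assumes "x \<in> gen_span" "y \<in> gen_span" "x \<noteq> y"
  shows "li_yorke_pair N (bw_shift w) x y"
  using irregular_vec_gen_span[OF gen_span_diff[OF assms(1,2)]] assms(3)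
  unfolding li_yorke_pair_def irregular_vec_def bw_shift_power_diff[symmetric] seq_diff_eq_0_iff
  by simp

lemma bw_shift_densely_uniformly_li_yorke_chaotic: "densely_uniformly_li_yorke_chaotic X N (bw_shift w)"
  unfolding densely_uniformly_li_yorke_chaotic_def
proof (intro exI[of _ gen_span] conjI gen_span_dense uncountable_gen_span)
  have "(\<lambda>n. N ((bw_shift w ^^ shrink_time n) (seq_diff x y))) \<longlonglongrightarrow> 0 \<and>
      filterlim (\<lambda>n. N ((bw_shift w ^^ block_len n) (seq_diff x y))) at_top sequentially"
    if "x \<in> gen_span" "y \<in> gen_span" "x \<noteq> y" for x y
    using gen_span_shrinks gen_span_blows_up gen_span_diff[OF that(1,2)] that(3)
    by (simp add: seq_diff_eq_0_iff)
  moreover have "\<exists>x\<in>gen_span. \<exists>y\<in>gen_span. x \<noteq> y"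
    using scaled_generator_0_mem[of 1] scaled_generator_0_mem[of 0] generator_0_nonzero by auto
  ultimately show "uniformly_li_yorke_scrambled X N (bw_shift w) gen_span"
    unfolding uniformly_li_yorke_scrambled_def bw_shift_power_diff[symmetric]
    using gen_span_subset by blast
qed

lemma bw_shift_dense_irregular_manifold: "dense_irregular_manifold X N (bw_shift w)"
  unfolding dense_irregular_manifold_def
  using seq_subspace_gen_span gen_span_dense irregular_vec_gen_span by blast

lemma bw_shift_li_yorke_chaotic: "li_yorke_chaotic X N (bw_shift w)"
  unfolding li_yorke_chaotic_def using gen_span_subset uncountable_gen_span li_yorke_pair_gen_span by blast

lemma bw_shift_has_li_yorke_pair: "\<exists>x\<in>X. \<exists>y\<in>X. li_yorke_pair N (bw_shift w) x y"
proof -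
  have "generator 0 \<in> gen_span" "(\<lambda>i. 0) \<in> gen_span"
    using scaled_generator_0_mem[of 1] scaled_generator_0_mem[of 0] by simp_all
  then show ?thesis
    using li_yorke_pair_gen_span generator_0_nonzero gen_span_subset by blast
qed

end

theorem corollary3p9:
  fixes w :: "nat \<Rightarrow> 'a::{real_normed_field, banach}"
    and X :: "(nat \<Rightarrow> 'a) set" and N :: "(nat \<Rightarrow> 'a) \<Rightarrow> real" and p :: real
  assumes space: "(1 \<le> p \<and> X = lp_seq p \<and> N = lp_norm p) \<or> (X = c0_seq \<and> N = c0_norm)"
    and w_nonzero: "\<forall>j\<ge>1. w j \<noteq> 0"
    and w_bounded: "\<exists>M. \<forall>j\<ge>1. norm (w j) \<le> M"
  shows "let T = bw_shift w;
             P1 = ((SUP kn \<in> {(k, n). k \<ge> 1 \<and> n \<ge> 1}.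
                      ereal (\<Prod>j\<in>{fst kn + 1 .. snd kn + fst kn + 1}. norm (w j))) = \<infinity>);
             P2 = (\<exists>x\<in>X. \<exists>y\<in>X. li_yorke_pair N T x y);
             P3 = li_yorke_chaotic X N T;
             P4 = dense_irregular_manifold X N T;
             P5 = densely_uniformly_li_yorke_chaotic X N T
         in (P1 \<longleftrightarrow> P2) \<and> (P1 \<longleftrightarrow> P3) \<and> (P1 \<longleftrightarrow> P4) \<and> (P1 \<longleftrightarrow> P5)"
proof -
  interpret seq_space X N
    using space lp_seq_space c0_seq_space by blast
  obtain M where M: "\<forall>j\<ge>1. norm (w j) \<le> M"
    using w_bounded by blast
  define K where "K = max 1 M"
  have K: "1 \<le> K" and wK: "\<forall>j\<ge>1. norm (w j) \<le> K"
    using M by (auto simp: K_def intro: le_max_iff_disj[THEN iffD2])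
  note P1_iff = SUP_prod_eq_infinity_iff[OF K wK]
  \<comment> \<open>The argument never divides by a weight.\<close>
  show ?thesis
  proof (cases "\<forall>B. \<exists>m n. B < norm (wprod w m n)")
    case True
    interpret unbounded_weights X N w K
      using True K wK by unfold_locales
    show ?thesis
      unfolding Let_def P1_iff
      using True bw_shift_has_li_yorke_pair bw_shift_li_yorke_chaotic
        bw_shift_dense_irregular_manifold bw_shift_densely_uniformly_li_yorke_chaotic
      by simp
  next
    case False
    then obtain C where C: "\<And>m n. norm (wprod w m n) \<le> C"
      by (meson not_le)
    show ?thesis
      unfolding Let_def P1_iff
      using False not_li_yorke_pair_if_bounded[OF C] not_li_yorke_chaotic_if_bounded[OF C]
        not_dense_irregular_manifold_if_bounded[OF C]
        not_densely_uniformly_li_yorke_chaotic_if_bounded[OF C]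
      by blast
  qed
qed

end
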